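(* Let $U\subset \mathbb R^n$ and $V\subset \mathbb R^m$ be open and let $f:U\times V\to \mathbb R$ be upper-semicontinuous and bounded. For $\epsilon>0$ define $f^{\epsilon,p}(x,y)= \sup_{z\in U} \{ f(z,y) - \frac{1}{2\epsilon} \| z-x\|^2\}$ for $(x,y)\in U\times V$. Then: (i) if for each fixed $x$ the function $y\mapsto f(x,y)$ is convex, then $(x,y)\mapsto f^{\epsilon,p}(x,y) + \frac{1}{2\epsilon} \|x\|^2$ is convex; (ii) for $0<\epsilon'\le \epsilon$, $f \le f^{\epsilon',p} \le f^{\epsilon,p}$; (iii) with $\delta =2 (\epsilon \|f\|_{\infty})^{1/2}$, $f^{\epsilon,p}(x,y) = \sup_{\|\tau\|<\delta} \{ f(x+\tau,y) - \frac{1}{2\epsilon} \|\tau\|^2\}$ for $(x,y)\in U(\delta)\times V$; (iv) $\lim_{\epsilon\to 0^+} f^{\epsilon,p}(x,y) = f(x,y)$ for all $(x,y)\in U\times V$; (v) if $F$ is a constant-coefficient primitive subequation on $U$ with the Negativity Property and $f$ is $F\#\mathcal P$-subharmonic, then $f^{\epsilon,p}$ is $F\#\mathcal P$-subharmonic on $U(\delta)\times V$, with $\delta$ as in (iii).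
   Context: $U(\delta)=\{x\in\mathbb R^n: B_\delta(x)\subset U\}$ and $\|f\|_\infty=\sup|f|$. $J^2(U)=U\times\mathbb R\times\mathbb R^n\times\operatorname{Sym}^2_n$ ($\operatorname{Sym}^2_n$ = real symmetric $n\times n$ matrices), $J^2_n=\mathbb R\times\mathbb R^n\times\operatorname{Sym}^2_n$, and $F_x=\{(r,p,A):(x,r,p,A)\in F\}$. $F\subset J^2(U)$ is a primitive subequation if it is closed and $(r,p,A)\in F_x$, $P$ positive semidefinite imply $(r,p,A+P)\in F_x$; it is constant-coefficient if $F_x$ is independent of $x$; it has the Negativity Property if $(r,p,A)\in F_x$ and $r'\le r$ imply $(r',p,A)\in F_x$. For an upper-semicontinuous $h$ into $\mathbb R\cup\{-\infty\}$ on an open set $W\subset\mathbb R^k$ and $G\subset J^2(W)$: $(p,A)$ is an upper contact jet of $h$ at $w$ (with $h(w)\ne-\infty$) if $h(v)\le h(w)+p\cdot(v-w)+\frac12(v-w)^tA(v-w)$ for $v$ near $w$, and $h$ is $G$-subharmonic if $(h(w),p,A)\in G_w$ for all such jets. $\mathcal P\subset J^2(V)$ is $\{(y,r,p,D): D \text{ positive semidefinite}\}$. For $\Gamma\in\operatorname{Hom}(\mathbb R^n,\mathbb R^m)$ and $\alpha=(r,(p_1,p_2),\begin{pmatrix}B&C\\C^t&D\end{pmatrix})\in J^2_{n+m}$ set $i_\Gamma^*\alpha=(r,p_1+\Gamma^tp_2,B+C\Gamma+\Gamma^tC^t+\Gamma^tD\Gamma)$ and $j^*\alpha=(r,p_2,D)$;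 then $(F\#\mathcal P)_{(x,y)}=\{\alpha: i_\Gamma^*\alpha\in F_x\ \forall\Gamma,\ j^*\alpha\in\mathcal P_y\}$. *)

theory Defs
  imports "HOL-Analysis.Analysis"
begin

definition usc_on :: "'a::topological_space set \<Rightarrow> ('a \<Rightarrow> real) \<Rightarrow> bool" where
  "usc_on W h \<longleftrightarrow> (\<forall>w\<in>W. \<forall>a. h w < a \<longrightarrow> eventually (\<lambda>v. h v < a) (at w within W))"

text \<open>Convexity of a function on a (possibly non-convex) set: convex along every
  segment contained in the set.  For convex sets this is ordinary convexity.\<close>
definition convex_fun_on :: "'a::real_vector set \<Rightarrow> ('a \<Rightarrow> real) \<Rightarrow> bool" where
  "convex_fun_on S g \<longleftrightarrow> (\<forall>a\<in>S. \<forall>b\<in>S. closed_segment a b \<subseteq> S \<longrightarrow>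
      (\<forall>t\<in>{0..1}. g ((1 - t) *\<^sub>R a + t *\<^sub>R b) \<le> (1 - t) * g a + t * g b))"

definition sym_mat :: "real^'n^'n \<Rightarrow> bool" where
  "sym_mat A \<longleftrightarrow> transpose A = A"

definition psd :: "real^'n^'n \<Rightarrow> bool" where
  "psd A \<longleftrightarrow> sym_mat A \<and> (\<forall>v. 0 \<le> v \<bullet> (A *v v))"

text \<open>A constant-coefficient primitive subequation F on U, given by its common fibre
  F0 = F_x (a subset of J^2_n = R x R^n x Sym^2_n); F = U x F0.\<close>
definition cc_primitive_subequation :: "(real \<times> (real^'n) \<times> (real^'n^'n)) set \<Rightarrow> bool" where
  "cc_primitive_subequation F0 \<longleftrightarrow>
     closed F0 \<and> (\<forall>(r,p,A)\<in>F0. sym_mat A) \<and>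
     (\<forall>r p A P. (r,p,A) \<in> F0 \<longrightarrow> psd P \<longrightarrow> (r, p, A + P) \<in> F0)"

definition negativity_property :: "(real \<times> (real^'n) \<times> (real^'n^'n)) set \<Rightarrow> bool" where
  "negativity_property F0 \<longleftrightarrow> (\<forall>r p A r'. (r,p,A) \<in> F0 \<longrightarrow> r' \<le> r \<longrightarrow> (r', p, A) \<in> F0)"

text \<open>Upper contact jet at w = (x,y) in R^n x R^m.  The jet is
  ((p1,p2), [[B, C],[C^t, D]]) with B, D symmetric; the quadratic form of the block
  matrix on (a,b) is a.Ba + 2 a.Cb + b.Db.\<close>

definition upcj ::
  "(real^'n \<Rightarrow> real^'m \<Rightarrow> real) \<Rightarrow> real^'n \<Rightarrow> real^'m \<Rightarrow>
   real^'n \<Rightarrow> real^'m \<Rightarrow> real^'n^'n \<Rightarrow> real^'m^'n \<Rightarrow> real^'m^'m \<Rightarrow> bool" where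
  "upcj h x y p1 p2 B C D \<longleftrightarrow> sym_mat B \<and> sym_mat D \<and>
     eventually (\<lambda>(x',y'). h x' y' \<le> h x y + p1 \<bullet> (x' - x) + p2 \<bullet> (y' - y)
        + (1/2) * ((x' - x) \<bullet> (B *v (x' - x)) + 2 * ((x' - x) \<bullet> (C *v (y' - y)))
                   + (y' - y) \<bullet> (D *v (y' - y)))) (nhds (x, y))"

text \<open>i_Gamma^* alpha for Gamma in Hom(R^n,R^m) (an m x n matrix).\<close>
definition i_pull ::
  "real^'n^'m \<Rightarrow> real \<Rightarrow> real^'n \<Rightarrow> real^'m \<Rightarrow> real^'n^'n \<Rightarrow> real^'m^'n \<Rightarrow> real^'m^'m
   \<Rightarrow> real \<times> (real^'n) \<times> (real^'n^'n)" where
  "i_pull \<Gamma> r p1 p2 B C D =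
     (r, p1 + transpose \<Gamma> *v p2, B + C ** \<Gamma> + transpose \<Gamma> ** transpose C + transpose \<Gamma> ** D ** \<Gamma>)"

definition FP_subharmonic ::
  "(real \<times> (real^'n) \<times> (real^'n^'n)) set \<Rightarrow> ((real^'n) \<times> (real^'m)) set \<Rightarrow>
   (real^'n \<Rightarrow> real^'m \<Rightarrow> real) \<Rightarrow> bool" where
  "FP_subharmonic F0 W h \<longleftrightarrow> usc_on W (\<lambda>(x,y). h x y) \<and>
     (\<forall>(x,y)\<in>W. \<forall>p1 p2 B C D. upcj h x y p1 p2 B C D \<longrightarrow>
        (\<forall>\<Gamma>. i_pull \<Gamma> (h x y) p1 p2 B C D \<in> F0) \<and> psd D)"

definition sup_conv :: "real \<Rightarrow> (real^'n) set \<Rightarrow> (real^'n \<Rightarrow> real^'m \<Rightarrow> real) \<Rightarrow> real^'n \<Rightarrow> real^'m \<Rightarrow> real" where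
  "sup_conv \<epsilon> U f x y = (SUP z\<in>U. f z y - (norm (z - x))^2 / (2 * \<epsilon>))"

definition sup_norm :: "(real^'n) set \<Rightarrow> (real^'m) set \<Rightarrow> (real^'n \<Rightarrow> real^'m \<Rightarrow> real) \<Rightarrow> real" where
  "sup_norm U V f = (SUP (x,y)\<in>U \<times> V. \<bar>f x y\<bar>)"

definition shrink :: "'a::metric_space set \<Rightarrow> real \<Rightarrow> 'a set" where
  "shrink U \<delta> = {x. ball x \<delta> \<subseteq> U}"

end

theory Submission
  imports Defs
begin

text \<open>
  If |f| \<le> M, a competitor z with |z - x| \<ge> r contributes at most M - r^2/(2\<epsilon>) to the
  supremum defining sup_conv \<epsilon> U f x y; for r = \<delta> = 2 sqrt(\<epsilon> M) this bound is -M \<le> f x y.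
  So for x in U(\<delta>) only a compact ball around x inside U matters: the supremum is attained, as
  f is upper semicontinuous, and it depends upper semicontinuously on (x, y) by the tube lemma.
  Convexity holds because |x|^2 - |z - x|^2 is affine in x, which makes
  sup_conv + |x|^2/(2\<epsilon>) a supremum of convex functions. At a maximiser z, translation by z - x
  turns an upper contact jet of the sup-convolution at (x, y) into one of f at (z, y) with a larger
  value, and the Negativity Property carries the F#P condition back.
\<close>

lemma usc_on_eventually_nhds:
  assumes "usc_on W h" "w \<in> W" "h w < a"
  shows "eventually (\<lambda>v. v \<in> W \<longrightarrow> h v < a) (nhds w)"
proof -
  have "eventually (\<lambda>v. h v < a) (at w within W)"
    using assms unfolding usc_on_def by blast
  then show ?thesis
    unfolding eventually_at_filter by eventually_elim (use assms in auto)
qed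

lemma usc_on_compose:
  assumes "usc_on S h" "continuous_on W \<phi>" "\<phi> ` W \<subseteq> S"
  shows "usc_on W (\<lambda>w. h (\<phi> w))"
  unfolding usc_on_def
proof (intro ballI allI impI)
  fix w a assume w: "w \<in> W" and less: "h (\<phi> w) < a"
  have "eventually (\<lambda>u. u \<in> S \<longrightarrow> h u < a) (nhds (\<phi> w))"
    using usc_on_eventually_nhds[OF assms(1) _ less] w assms(3) by blast
  moreover have "(\<phi> \<longlongrightarrow> \<phi> w) (at w within W)"
    using assms(2) w unfolding continuous_on_def by blast
  ultimately have "eventually (\<lambda>v. \<phi> v \<in> S \<longrightarrow> h (\<phi> v) < a) (at w within W)"
    by (rule eventually_compose_filterlim)
  moreover have "eventually (\<lambda>v. v \<in> W) (at w within W)"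
    by (simp add: eventually_at_filter)
  ultimately show "eventually (\<lambda>v. h (\<phi> v) < a) (at w within W)"
    by eventually_elim (use assms(3) in blast)
qed

lemma usc_on_diff:
  assumes "usc_on W h" "continuous_on W g"
  shows "usc_on W (\<lambda>w. h w - g w)"
  unfolding usc_on_def
proof (intro ballI allI impI)
  fix w a assume w: "w \<in> W" and less: "h w - g w < a"
  define \<eta> where "\<eta> = (a - (h w - g w)) / 2"
  have "\<eta> > 0" using less by (simp add: \<eta>_def)
  then have "eventually (\<lambda>v. h v < h w + \<eta>) (at w within W)"
    using assms(1) w unfolding usc_on_def by simp
  moreover have "eventually (\<lambda>v. g w - \<eta> < g v) (at w within W)"
    using assms(2) w \<open>\<eta> > 0\<close> unfolding continuous_on_def by (auto intro: order_tendstoD)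
  ultimately show "eventually (\<lambda>v. h v - g v < a) (at w within W)"
    by eventually_elim (simp add: \<eta>_def field_simps)
qed

lemma usc_on_attains_max:
  assumes "compact K" "K \<noteq> {}" "usc_on K h"
  shows "\<exists>z\<in>K. \<forall>w\<in>K. h w \<le> h z"
proof (rule ccontr)
  assume "\<not> ?thesis"
  then obtain better where better: "\<And>z. z \<in> K \<Longrightarrow> better z \<in> K \<and> h z < h (better z)"
    by (metis not_le)
  have "\<exists>T. open T \<and> z \<in> T \<and> (\<forall>v\<in>T \<inter> K. h v < h (better z))" if "z \<in> K" for z
  proof -
    have "eventually (\<lambda>v. v \<in> K \<longrightarrow> h v < h (better z)) (nhds z)"
      using usc_on_eventually_nhds[OF assms(3) that] better[OF that] by blast
    then show ?thesis unfolding eventually_nhds by blast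
  qed
  then obtain T where
    T: "\<And>z. z \<in> K \<Longrightarrow> open (T z) \<and> z \<in> T z \<and> (\<forall>v\<in>T z \<inter> K. h v < h (better z))"
    by metis
  obtain F where F: "F \<subseteq> K" "finite F" "K \<subseteq> (\<Union>z\<in>F. T z)"
    using compactE_image[OF assms(1), of K T] T by blast
  define m where "m = Max ((\<lambda>z. h (better z)) ` F)"
  have "F \<noteq> {}" using F(3) assms(2) by blast
  then have "m \<in> (\<lambda>z. h (better z)) ` F"
    unfolding m_def using F(2) by (intro Max_in) auto
  then obtain z0 where z0: "z0 \<in> F" "h (better z0) = m" by auto
  have m_ge: "h (better z) \<le> m" if "z \<in> F" for z
    unfolding m_def using F(2) that by (intro Max_ge) auto
  have "better z0 \<in> K" using better z0(1) F(1) by blast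
  then obtain z where z: "z \<in> F" "better z0 \<in> T z" using F(3) by blast
  then have "h (better z0) < h (better z)" using T \<open>better z0 \<in> K\<close> F(1) by blast
  with z0(2) m_ge[OF z(1)] show False by linarith
qed

lemma eventually_nhds_forall_compact:
  assumes "compact K" "\<And>z. z \<in> K \<Longrightarrow> eventually P (nhds (x, z))"
  shows "eventually (\<lambda>x'. \<forall>z\<in>K. P (x', z)) (nhds x)"
proof -
  have sub: "{x} \<times> K \<subseteq> interior (Collect P)"
  proof
    fix q assume "q \<in> {x} \<times> K"
    then have "eventually P (nhds q)" using assms(2) by auto
    then show "q \<in> interior (Collect P)"
      unfolding eventually_nhds by (auto intro: interiorI)
  qed
  then obtain X where X: "x \<in> X" "open X" "X \<times> K \<subseteq> interior (Collect P)"
    using Elementary_Topology.tube_lemma[OF assms(1) open_interior sub] by blast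
  have "P (x', z)" if "x' \<in> X" "z \<in> K" for x' z
    using X(3) interior_subset that by fastforce
  then show ?thesis
    unfolding eventually_nhds using X(1,2) by blast
qed

lemma affine_norm_sq_minus_dist_sq:
  fixes z a b :: "'a::real_inner"
  shows "(norm ((1 - t) *\<^sub>R a + t *\<^sub>R b))^2 - (norm (z - ((1 - t) *\<^sub>R a + t *\<^sub>R b)))^2
     = (1 - t) * ((norm a)^2 - (norm (z - a))^2) + t * ((norm b)^2 - (norm (z - b))^2)"
  by (simp add: power2_norm_eq_inner inner_diff_left inner_diff_right inner_add_left
      inner_add_right algebra_simps inner_commute)

lemma exists_radius_penalty_less:
  fixes \<epsilon> M b :: real
  assumes "0 < \<epsilon>" "0 < M" "- M < b"
  shows "\<exists>r>0. r < 2 * sqrt (\<epsilon> * M) \<and> M - r^2 / (2 * \<epsilon>) < b"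
proof -
  let ?\<delta> = "2 * sqrt (\<epsilon> * M)"
  have "M - ?\<delta>^2 / (2 * \<epsilon>) = - M"
    using assms by (simp add: power_mult_distrib)
  moreover have "((\<lambda>r. M - r^2 / (2 * \<epsilon>)) \<longlongrightarrow> M - ?\<delta>^2 / (2 * \<epsilon>)) (at_left ?\<delta>)"
    by (intro tendsto_intros) (use assms in auto)
  ultimately have "eventually (\<lambda>r. M - r^2 / (2 * \<epsilon>) < b) (at_left ?\<delta>)"
    using assms(3) by (auto intro: order_tendstoD)
  moreover have "eventually (\<lambda>r. r \<in> {0<..<?\<delta>}) (at_left ?\<delta>)"
    using assms by (intro eventually_at_left_real) simp
  ultimately have "eventually (\<lambda>r. r \<in> {0<..<?\<delta>} \<and> M - r^2 / (2 * \<epsilon>) < b) (at_left ?\<delta>)"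
    by eventually_elim blast
  then show ?thesis
    using eventually_happens'[OF trivial_limit_at_left_real] by fastforce
qed

lemma sup_conv_le:
  assumes "U \<noteq> {}" "\<And>z. z \<in> U \<Longrightarrow> f z y - (norm (z - x))^2 / (2 * \<epsilon>) \<le> b"
  shows "sup_conv \<epsilon> U f x y \<le> b"
  unfolding sup_conv_def using assms by (rule cSUP_least)

lemma abs_le_sup_norm:
  assumes "\<exists>M. \<forall>x\<in>U. \<forall>y\<in>V. \<bar>f x y\<bar> \<le> M" "x \<in> U" "y \<in> V"
  shows "\<bar>f x y\<bar> \<le> sup_norm U V f"
proof -
  obtain M where "\<forall>x\<in>U. \<forall>y\<in>V. \<bar>f x y\<bar> \<le> M" using assms(1) by blast
  then have "bdd_above ((\<lambda>(x,y). \<bar>f x y\<bar>) ` (U \<times> V))" by (intro bdd_aboveI2[of _ _ M]) auto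
  from cSUP_upper[OF _ this, of "(x, y)"] show ?thesis
    using assms(2,3) by (simp add: sup_norm_def)
qed

locale bounded_on_prod =
  fixes U :: "(real^'n) set" and V :: "(real^'m) set"
    and f :: "real^'n \<Rightarrow> real^'m \<Rightarrow> real" and M :: real
  assumes abs_bounded: "\<And>x y. x \<in> U \<Longrightarrow> y \<in> V \<Longrightarrow> \<bar>f x y\<bar> \<le> M"
begin

lemma sup_conv_ge:
  assumes "0 < \<epsilon>" "y \<in> V" "z \<in> U"
  shows "f z y - (norm (z - x))^2 / (2 * \<epsilon>) \<le> sup_conv \<epsilon> U f x y"
proof -
  have "bdd_above ((\<lambda>z. f z y - (norm (z - x))^2 / (2 * \<epsilon>)) ` U)"
  proof (rule bdd_aboveI2)
    fix w assume "w \<in> U"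
    then have "f w y \<le> M" using abs_bounded assms(2) by force
    moreover have "0 \<le> (norm (w - x))^2 / (2 * \<epsilon>)" using assms(1) by simp
    ultimately show "f w y - (norm (w - x))^2 / (2 * \<epsilon>) \<le> M" by linarith
  qed
  then show ?thesis
    unfolding sup_conv_def using assms(3) by (rule cSUP_upper[rotated])
qed

lemma le_sup_conv:
  assumes "0 < \<epsilon>" "x \<in> U" "y \<in> V"
  shows "f x y \<le> sup_conv \<epsilon> U f x y"
  using sup_conv_ge[OF assms(1,3,2), of x] by simp

lemma sup_conv_le_max_far:
  assumes "0 < \<epsilon>" "U \<noteq> {}" "y \<in> V" "0 \<le> r"
    and near: "\<And>z. z \<in> U \<Longrightarrow> norm (z - x) < r \<Longrightarrow> f z y - (norm (z - x))^2 / (2 * \<epsilon>) \<le> b"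
  shows "sup_conv \<epsilon> U f x y \<le> max b (M - r^2 / (2 * \<epsilon>))"
proof (rule sup_conv_le[OF assms(2)])
  fix z assume z: "z \<in> U"
  show "f z y - (norm (z - x))^2 / (2 * \<epsilon>) \<le> max b (M - r^2 / (2 * \<epsilon>))"
  proof (cases "norm (z - x) < r")
    case True
    then show ?thesis using near[OF z] by simp
  next
    case False
    then have "r^2 / (2 * \<epsilon>) \<le> (norm (z - x))^2 / (2 * \<epsilon>)"
      using assms(1,4) by (intro divide_right_mono power_mono) auto
    moreover have "f z y \<le> M" using abs_bounded z assms(3) by force
    ultimately show ?thesis by linarith
  qed
qed

lemma sup_conv_mono:
  assumes "0 < \<epsilon>'" "\<epsilon>' \<le> \<epsilon>" "U \<noteq> {}" "y \<in> V"
  shows "sup_conv \<epsilon>' U f x y \<le> sup_conv \<epsilon> U f x y"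
proof (rule sup_conv_le[OF assms(3)])
  fix z assume z: "z \<in> U"
  have "(norm (z - x))^2 / (2 * \<epsilon>) \<le> (norm (z - x))^2 / (2 * \<epsilon>')"
    using assms(1,2) by (intro divide_left_mono) auto
  then show "f z y - (norm (z - x))^2 / (2 * \<epsilon>') \<le> sup_conv \<epsilon> U f x y"
    using sup_conv_ge[OF _ assms(4) z, of \<epsilon> x] assms(1,2) by linarith
qed

lemma convex_fun_on_sup_conv_plus_norm:
  assumes "0 < \<epsilon>" and convex: "\<And>x. x \<in> U \<Longrightarrow> convex_fun_on V (\<lambda>y. f x y)"
  shows "convex_fun_on (U \<times> V) (\<lambda>(x,y). sup_conv \<epsilon> U f x y + (norm x)^2 / (2 * \<epsilon>))"
  unfolding convex_fun_on_def
proof (intro ballI impI)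
  fix a b t assume a: "a \<in> U \<times> V" and b: "b \<in> U \<times> V" and t: "t \<in> {0..1::real}"
    and seg: "closed_segment a b \<subseteq> U \<times> V"
  obtain a1 a2 b1 b2 where ab: "a = (a1, a2)" "b = (b1, b2)" by fastforce
  define c1 where "c1 = (1 - t) *\<^sub>R a1 + t *\<^sub>R b1"
  define c2 where "c2 = (1 - t) *\<^sub>R a2 + t *\<^sub>R b2"
  have c: "(1 - t) *\<^sub>R a + t *\<^sub>R b = (c1, c2)" by (simp add: ab c1_def c2_def)
  have "closed_segment a2 b2 = snd ` closed_segment a b"
    using closed_segment_linear_image[OF linear_snd, of a b] ab by simp
  then have seg2: "closed_segment a2 b2 \<subseteq> V" using seg by auto
  have a2: "a2 \<in> V" and b2: "b2 \<in> V" and "U \<noteq> {}" using a b ab by auto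
  let ?H = "\<lambda>x y. sup_conv \<epsilon> U f x y + (norm x)^2 / (2 * \<epsilon>)"
  have "sup_conv \<epsilon> U f c1 c2 \<le> (1 - t) * ?H a1 a2 + t * ?H b1 b2 - (norm c1)^2 / (2 * \<epsilon>)"
  proof (rule sup_conv_le[OF \<open>U \<noteq> {}\<close>])
    fix z assume z: "z \<in> U"
    have "f z c2 \<le> (1 - t) * f z a2 + t * f z b2"
      using convex[OF z] a2 b2 seg2 t unfolding convex_fun_on_def c2_def by blast
    moreover have "((norm c1)^2 - (norm (z - c1))^2) / (2 * \<epsilon>)
       = (1 - t) * (((norm a1)^2 - (norm (z - a1))^2) / (2 * \<epsilon>))
         + t * (((norm b1)^2 - (norm (z - b1))^2) / (2 * \<epsilon>))"
      unfolding c1_def affine_norm_sq_minus_dist_sq using assms(1) by (simp add: field_simps)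
    moreover have "(1 - t) * (f z a2 - (norm (z - a1))^2 / (2 * \<epsilon>)) \<le> (1 - t) * sup_conv \<epsilon> U f a1 a2"
      using sup_conv_ge[OF assms(1) a2 z] t by (intro mult_left_mono) auto
    moreover have "t * (f z b2 - (norm (z - b1))^2 / (2 * \<epsilon>)) \<le> t * sup_conv \<epsilon> U f b1 b2"
      using sup_conv_ge[OF assms(1) b2 z] t by (intro mult_left_mono) auto
    ultimately show "f z c2 - (norm (z - c1))^2 / (2 * \<epsilon>)
        \<le> (1 - t) * ?H a1 a2 + t * ?H b1 b2 - (norm c1)^2 / (2 * \<epsilon>)"
      by (simp add: algebra_simps add_divide_distrib diff_divide_distrib)
  qed
  then show "(\<lambda>(x, y). ?H x y) ((1 - t) *\<^sub>R a + t *\<^sub>R b)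
      \<le> (1 - t) * (\<lambda>(x, y). ?H x y) a + t * (\<lambda>(x, y). ?H x y) b"
    using c ab by simp
qed

lemma sup_conv_eq_SUP_ball:
  assumes "0 < \<epsilon>" "0 < M" and ball: "ball x (2 * sqrt (\<epsilon> * M)) \<subseteq> U" and "y \<in> V"
  shows "sup_conv \<epsilon> U f x y
    = (SUP \<tau>\<in>ball 0 (2 * sqrt (\<epsilon> * M)). f (x + \<tau>) y - (norm \<tau>)^2 / (2 * \<epsilon>))"
    (is "_ = (SUP \<tau>\<in>ball 0 ?\<delta>. ?g \<tau>)")
proof (rule antisym)
  have "0 < ?\<delta>" using assms by simp
  then have "x \<in> U" using ball by auto
  have shifted: "x + \<tau> \<in> U" if "\<tau> \<in> ball 0 ?\<delta>" for \<tau>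
    using that ball by (auto simp: dist_norm)
  have bdd: "bdd_above (?g ` ball 0 ?\<delta>)"
    using sup_conv_ge[OF assms(1,4) shifted, of _ x] by (intro bdd_aboveI2) simp
  have "- M \<le> f x y" using abs_bounded[OF \<open>x \<in> U\<close> assms(4)] by simp
  also have "f x y \<le> (SUP \<tau>\<in>ball 0 ?\<delta>. ?g \<tau>)"
    using cSUP_upper[OF _ bdd, of 0] \<open>0 < ?\<delta>\<close> by simp
  finally have "max (SUP \<tau>\<in>ball 0 ?\<delta>. ?g \<tau>) (M - ?\<delta>^2 / (2 * \<epsilon>)) = (SUP \<tau>\<in>ball 0 ?\<delta>. ?g \<tau>)"
    using assms(1,2) by (simp add: power_mult_distrib)
  moreover have "sup_conv \<epsilon> U f x y \<le> max (SUP \<tau>\<in>ball 0 ?\<delta>. ?g \<tau>) (M - ?\<delta>^2 / (2 * \<epsilon>))"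
  proof (rule sup_conv_le_max_far)
    fix z assume "z \<in> U" "norm (z - x) < ?\<delta>"
    then have "z - x \<in> ball 0 ?\<delta>" by (simp add: dist_norm norm_minus_commute)
    from cSUP_upper[OF this bdd]
    show "f z y - (norm (z - x))^2 / (2 * \<epsilon>) \<le> (SUP \<tau>\<in>ball 0 ?\<delta>. ?g \<tau>)" by simp
  qed (use assms \<open>x \<in> U\<close> in auto)
  ultimately show "sup_conv \<epsilon> U f x y \<le> (SUP \<tau>\<in>ball 0 ?\<delta>. ?g \<tau>)" by simp
  show "(SUP \<tau>\<in>ball 0 ?\<delta>. ?g \<tau>) \<le> sup_conv \<epsilon> U f x y"
    using sup_conv_ge[OF assms(1,4) shifted, of _ x] \<open>0 < ?\<delta>\<close> by (intro cSUP_least) auto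
qed

lemma usc_on_slice:
  assumes usc: "usc_on (U \<times> V) (\<lambda>(x,y). f x y)" and "K \<subseteq> U" "y \<in> V"
  shows "usc_on K (\<lambda>z. f z y)"
proof -
  have "usc_on K (\<lambda>z. (\<lambda>(x,y). f x y) (z, y))"
    by (rule usc_on_compose[OF usc]) (use assms(2,3) in \<open>auto intro!: continuous_intros\<close>)
  then show ?thesis by simp
qed

lemma tendsto_sup_conv_at_right_0:
  assumes usc: "usc_on (U \<times> V) (\<lambda>(x,y). f x y)" and "x \<in> U" "y \<in> V"
  shows "((\<lambda>\<epsilon>. sup_conv \<epsilon> U f x y) \<longlongrightarrow> f x y) (at_right 0)"
proof (rule order_tendstoI)
  fix a assume "a < f x y"
  show "eventually (\<lambda>\<epsilon>. a < sup_conv \<epsilon> U f x y) (at_right 0)"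
    using eventually_at_right_less[of 0]
    by eventually_elim (use le_sup_conv assms(2,3) \<open>a < f x y\<close> in force)
next
  fix a assume "f x y < a"
  define a' where "a' = (f x y + a) / 2"
  have a': "f x y < a'" "a' < a" using \<open>f x y < a\<close> by (auto simp: a'_def)
  have "eventually (\<lambda>z. z \<in> U \<longrightarrow> f z y < a') (nhds x)"
    using usc_on_eventually_nhds[OF usc_on_slice[OF usc order_refl assms(3)] assms(2) a'(1)] .
  then obtain d where "0 < d" and d: "\<And>z. dist z x < d \<Longrightarrow> z \<in> U \<longrightarrow> f z y < a'"
    unfolding eventually_nhds_metric by blast
  have "LIM \<epsilon> at_right 0. d^2 / 2 * inverse \<epsilon> :> at_top"
    using \<open>0 < d\<close> filterlim_inverse_at_top_right
    by (intro filterlim_tendsto_pos_mult_at_top[OF tendsto_const]) auto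
  then have "eventually (\<lambda>\<epsilon>. M - a' \<le> d^2 / 2 * inverse \<epsilon>) (at_right 0)"
    unfolding filterlim_at_top by blast
  with eventually_at_right_less[of 0]
  show "eventually (\<lambda>\<epsilon>. sup_conv \<epsilon> U f x y < a) (at_right 0)"
  proof eventually_elim
    case (elim \<epsilon>)
    have "sup_conv \<epsilon> U f x y \<le> max a' (M - d^2 / (2 * \<epsilon>))"
    proof (rule sup_conv_le_max_far)
      fix z assume "z \<in> U" "norm (z - x) < d"
      then have "f z y < a'" using d by (simp add: dist_norm)
      moreover have "0 \<le> (norm (z - x))^2 / (2 * \<epsilon>)" using elim by simp
      ultimately show "f z y - (norm (z - x))^2 / (2 * \<epsilon>) \<le> a'" by linarith
    qed (use elim assms \<open>0 < d\<close> in auto)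
    also have "\<dots> = a'" using elim by (simp add: field_simps)
    finally show ?case using a'(2) by linarith
  qed
qed

lemma sup_conv_attained:
  assumes usc: "usc_on (U \<times> V) (\<lambda>(x,y). f x y)" and "0 < \<epsilon>" "0 < M"
    and ball: "ball x (2 * sqrt (\<epsilon> * M)) \<subseteq> U" and "y \<in> V"
  shows "\<exists>z\<in>U. sup_conv \<epsilon> U f x y = f z y - (norm (z - x))^2 / (2 * \<epsilon>)"
proof (cases "sup_conv \<epsilon> U f x y = f x y")
  case True
  have "x \<in> U" using ball assms(2,3) by auto
  with True show ?thesis by force
next
  case False
  let ?g = "\<lambda>z. f z y - (norm (z - x))^2 / (2 * \<epsilon>)"
  have "x \<in> U" using ball assms(2,3) by auto
  then have "- M < sup_conv \<epsilon> U f x y"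
    using False le_sup_conv[OF assms(2) _ assms(5)] abs_bounded[OF _ assms(5)] by force
  then obtain r where r: "0 < r" "r < 2 * sqrt (\<epsilon> * M)" "M - r^2 / (2 * \<epsilon>) < sup_conv \<epsilon> U f x y"
    using exists_radius_penalty_less[OF assms(2,3)] by blast
  have "cball x r \<subseteq> ball x (2 * sqrt (\<epsilon> * M))" using r(2) by (simp add: cball_subset_ball_iff)
  with ball have K: "cball x r \<subseteq> U" by blast
  have "cball x r \<noteq> {}" using r(1) by simp
  moreover have "usc_on (cball x r) ?g"
    by (intro usc_on_diff usc_on_slice[OF usc K assms(5)])
      (use assms(2) in \<open>auto intro!: continuous_intros\<close>)
  ultimately obtain z0 where z0: "z0 \<in> cball x r" "\<And>z. z \<in> cball x r \<Longrightarrow> ?g z \<le> ?g z0"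
    using usc_on_attains_max[OF compact_cball] by blast
  have "sup_conv \<epsilon> U f x y \<le> max (?g z0) (M - r^2 / (2 * \<epsilon>))"
  proof (rule sup_conv_le_max_far)
    fix z assume "z \<in> U" "norm (z - x) < r"
    then have "z \<in> cball x r" by (simp add: dist_norm norm_minus_commute)
    then show "?g z \<le> ?g z0" by (rule z0(2))
  qed (use \<open>x \<in> U\<close> assms(2,5) r(1) in auto)
  then have "sup_conv \<epsilon> U f x y \<le> ?g z0" using r(3) by (simp add: le_max_iff_disj)
  moreover have "?g z0 \<le> sup_conv \<epsilon> U f x y" using sup_conv_ge[OF assms(2,5)] z0(1) K by blast
  ultimately show ?thesis using z0(1) K by (intro bexI[of _ z0]) auto
qed

lemma eventually_penalized_less_on_cball:
  assumes usc: "usc_on (U \<times> V) (\<lambda>(x,y). f x y)" and "0 < \<epsilon>"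
    and K: "cball x r \<subseteq> U" and "y \<in> V"
    and less: "\<And>z. z \<in> cball x r \<Longrightarrow> f z y - (norm (z - x))^2 / (2 * \<epsilon>) < b"
  shows "eventually (\<lambda>(x', y'). y' \<in> V \<longrightarrow>
      (\<forall>z\<in>cball x r. f z y' - (norm (z - x'))^2 / (2 * \<epsilon>) < b)) (nhds (x, y))"
proof -
  define W :: "(((real^'n) \<times> (real^'m)) \<times> (real^'n)) set" where "W = (UNIV \<times> V) \<times> U"
  define G where "G q = f (snd q) (snd (fst q)) - (norm (snd q - fst (fst q)))^2 / (2 * \<epsilon>)" for q
  have "usc_on W (\<lambda>q. (\<lambda>(x,y). f x y) (snd q, snd (fst q)))"
    by (rule usc_on_compose[OF usc]) (auto simp: W_def intro!: continuous_intros)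
  then have usc_G: "usc_on W G"
    unfolding G_def by (intro usc_on_diff) (use \<open>0 < \<epsilon>\<close> in \<open>auto intro!: continuous_intros\<close>)
  have "eventually (\<lambda>q. q \<in> W \<longrightarrow> G q < b) (nhds ((x, y), z))" if "z \<in> cball x r" for z
    using that K less[OF that] \<open>y \<in> V\<close>
    by (intro usc_on_eventually_nhds[OF usc_G]) (auto simp: W_def G_def)
  then have "eventually (\<lambda>p. \<forall>z\<in>cball x r. (p, z) \<in> W \<longrightarrow> G (p, z) < b) (nhds (x, y))"
    by (intro eventually_nhds_forall_compact) auto
  then show ?thesis
    by eventually_elim (use K in \<open>auto simp: W_def G_def\<close>)
qed

lemma eventually_sup_conv_le:
  assumes usc: "usc_on (U \<times> V) (\<lambda>(x,y). f x y)" and "0 < \<epsilon>" "0 \<le> r" "0 < \<rho>"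
    and K: "cball x (r + \<rho>) \<subseteq> U" and "y \<in> V" and far: "M - r^2 / (2 * \<epsilon>) \<le> b"
    and less: "\<And>z. z \<in> cball x (r + \<rho>) \<Longrightarrow> f z y - (norm (z - x))^2 / (2 * \<epsilon>) < b"
  shows "eventually (\<lambda>(x', y'). y' \<in> V \<longrightarrow> sup_conv \<epsilon> U f x' y' \<le> b) (nhds (x, y))"
proof -
  have "eventually (\<lambda>(x', y'). y' \<in> V \<longrightarrow>
      (\<forall>z\<in>cball x (r + \<rho>). f z y' - (norm (z - x'))^2 / (2 * \<epsilon>) < b)) (nhds (x, y))"
    using eventually_penalized_less_on_cball[OF usc assms(2) K \<open>y \<in> V\<close> less] .
  moreover have "eventually (\<lambda>p. dist p (x, y) < \<rho>) (nhds (x, y))"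
    using \<open>0 < \<rho>\<close> eventually_nhds_metric by blast
  ultimately show ?thesis
  proof eventually_elim
    case (elim p)
    obtain x' y' where p: "p = (x', y')" by fastforce
    have "dist x' x < \<rho>" using elim(2) dist_fst_le[of p "(x, y)"] p by simp
    have "sup_conv \<epsilon> U f x' y' \<le> max b (M - r^2 / (2 * \<epsilon>))" if "y' \<in> V"
    proof (rule sup_conv_le_max_far)
      fix z assume "z \<in> U" "norm (z - x') < r"
      with \<open>dist x' x < \<rho>\<close> have "z \<in> cball x (r + \<rho>)"
        using dist_triangle[of x z x'] by (simp add: dist_norm norm_minus_commute)
      then have "f z y' - (norm (z - x'))^2 / (2 * \<epsilon>) < b"
        using elim(1) p that by blast
      then show "f z y' - (norm (z - x'))^2 / (2 * \<epsilon>) \<le> b" by simp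
    qed (use that K \<open>0 < \<epsilon>\<close> \<open>0 \<le> r\<close> \<open>0 < \<rho>\<close> in auto)
    then show ?case using p far by auto
  qed
qed

lemma usc_on_sup_conv:
  assumes usc: "usc_on (U \<times> V) (\<lambda>(x,y). f x y)" and "0 < \<epsilon>" "0 < M"
  shows "usc_on (shrink U (2 * sqrt (\<epsilon> * M)) \<times> V) (\<lambda>(x,y). sup_conv \<epsilon> U f x y)"
  unfolding usc_on_def
proof (intro ballI allI impI)
  let ?\<delta> = "2 * sqrt (\<epsilon> * M)"
  fix w a assume w: "w \<in> shrink U ?\<delta> \<times> V" and less: "(\<lambda>(x,y). sup_conv \<epsilon> U f x y) w < a"
  obtain x y where xy: "w = (x, y)" by fastforce
  have ball: "ball x ?\<delta> \<subseteq> U" and "y \<in> V" using w xy by (auto simp: shrink_def)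
  then have "x \<in> U" using assms(2,3) by auto
  define a' where "a' = (sup_conv \<epsilon> U f x y + a) / 2"
  have a': "sup_conv \<epsilon> U f x y < a'" "a' < a" using less xy by (auto simp: a'_def)
  moreover have "- M \<le> sup_conv \<epsilon> U f x y"
    using abs_bounded[OF \<open>x \<in> U\<close> \<open>y \<in> V\<close>] le_sup_conv[OF assms(2) \<open>x \<in> U\<close> \<open>y \<in> V\<close>]
    by linarith
  ultimately have "- M < a'" by linarith
  then obtain r where r: "0 < r" "r < ?\<delta>" "M - r^2 / (2 * \<epsilon>) < a'"
    using exists_radius_penalty_less[OF assms(2,3)] by blast
  define \<rho> where "\<rho> = (?\<delta> - r) / 2"
  have "0 < \<rho>" "r + \<rho> < ?\<delta>" using r(2) by (simp_all add: \<rho>_def field_simps)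
  then have "cball x (r + \<rho>) \<subseteq> ball x ?\<delta>" by (simp add: cball_subset_ball_iff)
  with ball have K: "cball x (r + \<rho>) \<subseteq> U" by blast
  have "eventually (\<lambda>(x', y'). y' \<in> V \<longrightarrow> sup_conv \<epsilon> U f x' y' \<le> a') (nhds (x, y))"
  proof (rule eventually_sup_conv_le[OF usc assms(2) _ \<open>0 < \<rho>\<close> K \<open>y \<in> V\<close>])
    fix z assume "z \<in> cball x (r + \<rho>)"
    then have "z \<in> U" using K by blast
    from sup_conv_ge[OF assms(2) \<open>y \<in> V\<close> this, of x] a'(1)
    show "f z y - (norm (z - x))^2 / (2 * \<epsilon>) < a'" by linarith
  qed (use r in auto)
  then show "eventually (\<lambda>v. (\<lambda>(x,y). sup_conv \<epsilon> U f x y) v < a) (at w within shrink U ?\<delta> \<times> V)"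
    unfolding eventually_at_filter xy by eventually_elim (use a'(2) in auto)
qed

lemma upcj_at_maximizer:
  assumes "open U" "open V" "0 < \<epsilon>" "z0 \<in> U" "y0 \<in> V"
    and max: "sup_conv \<epsilon> U f x0 y0 = f z0 y0 - (norm (z0 - x0))^2 / (2 * \<epsilon>)"
    and jet: "upcj (sup_conv \<epsilon> U f) x0 y0 p1 p2 B C D"
  shows "upcj f z0 y0 p1 p2 B C D"
proof -
  define J where "J c a b = c + p1 \<bullet> a + p2 \<bullet> b
      + (1/2) * (a \<bullet> (B *v a) + 2 * (a \<bullet> (C *v b)) + b \<bullet> (D *v b))" for c a b
  have J_shift: "J c a b + d = J (c + d) a b" for c d a b by (simp add: J_def)
  define \<tau> where "\<tau> = z0 - x0"
  have sym: "sym_mat B" "sym_mat D" and jet_ev: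
    "eventually (\<lambda>(x, y). sup_conv \<epsilon> U f x y \<le> J (sup_conv \<epsilon> U f x0 y0) (x - x0) (y - y0))
      (nhds (x0, y0))"
    using jet unfolding upcj_def J_def by auto
  have "((\<lambda>v. (fst v - \<tau>, snd v)) \<longlongrightarrow> (fst (z0, y0) - \<tau>, snd (z0, y0))) (nhds (z0, y0))"
    by (intro tendsto_intros filterlim_ident)
  then have "((\<lambda>v. (fst v - \<tau>, snd v)) \<longlongrightarrow> (x0, y0)) (nhds (z0, y0))"
    by (simp add: \<tau>_def)
  from eventually_compose_filterlim[OF jet_ev this]
  have "eventually (\<lambda>(x, y). sup_conv \<epsilon> U f (x - \<tau>) y
      \<le> J (sup_conv \<epsilon> U f x0 y0) (x - \<tau> - x0) (y - y0)) (nhds (z0, y0))"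
    by (simp add: case_prod_unfold)
  moreover have "eventually (\<lambda>v. v \<in> U \<times> V) (nhds (z0, y0))"
    using assms(1,2,4,5) by (intro eventually_nhds_in_open) (auto intro: open_Times)
  ultimately have "eventually (\<lambda>(x, y). f x y \<le> J (f z0 y0) (x - z0) (y - y0)) (nhds (z0, y0))"
  proof eventually_elim
    case (elim v)
    obtain x y where v: "v = (x, y)" by fastforce
    have "f x y - (norm \<tau>)^2 / (2 * \<epsilon>) \<le> sup_conv \<epsilon> U f (x - \<tau>) y"
      using sup_conv_ge[OF assms(3), of y x "x - \<tau>"] elim(2) v by simp
    also have "\<dots> \<le> J (sup_conv \<epsilon> U f x0 y0) (x - z0) (y - y0)"
      using elim(1) v by (simp add: \<tau>_def)
    finally have "f x y \<le> J (sup_conv \<epsilon> U f x0 y0 + (norm \<tau>)^2 / (2 * \<epsilon>)) (x - z0) (y - y0)"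
      unfolding J_shift[symmetric] by linarith
    then show ?case using v max by (simp add: \<tau>_def)
  qed
  then show ?thesis
    unfolding upcj_def J_def using sym by simp
qed

lemma FP_subharmonic_sup_conv:
  assumes usc: "usc_on (U \<times> V) (\<lambda>(x,y). f x y)" and "open U" "open V" "0 < \<epsilon>" "0 < M"
    and subharmonic: "FP_subharmonic F0 (U \<times> V) f" and negativity: "negativity_property F0"
  shows "FP_subharmonic F0 (shrink U (2 * sqrt (\<epsilon> * M)) \<times> V) (sup_conv \<epsilon> U f)"
  unfolding FP_subharmonic_def
proof (intro conjI)
  show "usc_on (shrink U (2 * sqrt (\<epsilon> * M)) \<times> V) (\<lambda>(x,y). sup_conv \<epsilon> U f x y)"
    using usc_on_sup_conv[OF usc assms(4,5)] .
next
  show "\<forall>(x, y)\<in>shrink U (2 * sqrt (\<epsilon> * M)) \<times> V. \<forall>p1 p2 B C D.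
      upcj (sup_conv \<epsilon> U f) x y p1 p2 B C D \<longrightarrow>
      (\<forall>\<Gamma>. i_pull \<Gamma> (sup_conv \<epsilon> U f x y) p1 p2 B C D \<in> F0) \<and> psd D"
  proof clarify
    fix x y p1 p2 B C D
    assume "x \<in> shrink U (2 * sqrt (\<epsilon> * M))" "y \<in> V" and jet: "upcj (sup_conv \<epsilon> U f) x y p1 p2 B C D"
    then have "ball x (2 * sqrt (\<epsilon> * M)) \<subseteq> U" by (simp add: shrink_def)
    then obtain z where z: "z \<in> U" and max: "sup_conv \<epsilon> U f x y = f z y - (norm (z - x))^2 / (2 * \<epsilon>)"
      using sup_conv_attained[OF usc assms(4,5) _ \<open>y \<in> V\<close>] by blast
    have "upcj f z y p1 p2 B C D"
      using upcj_at_maximizer[OF assms(2,3,4) z \<open>y \<in> V\<close> max jet] .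
    then have "(\<forall>\<Gamma>. i_pull \<Gamma> (f z y) p1 p2 B C D \<in> F0) \<and> psd D"
      using subharmonic z \<open>y \<in> V\<close> unfolding FP_subharmonic_def by blast
    moreover have "sup_conv \<epsilon> U f x y \<le> f z y" using max assms(4) by simp
    ultimately show "(\<forall>\<Gamma>. i_pull \<Gamma> (sup_conv \<epsilon> U f x y) p1 p2 B C D \<in> F0) \<and> psd D"
      using negativity unfolding negativity_property_def i_pull_def by blast
  qed
qed

end

theorem lemma4p2:
  fixes U :: "(real^'n) set" and V :: "(real^'m) set"
    and f :: "real^'n \<Rightarrow> real^'m \<Rightarrow> real"
  assumes "open U" and "open V"
    and usc: "usc_on (U \<times> V) (\<lambda>(x,y). f x y)"
    and bdd: "\<exists>M. \<forall>x\<in>U. \<forall>y\<in>V. \<bar>f x y\<bar> \<le> M"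
  shows
    "(\<forall>\<epsilon>>0. (\<forall>x\<in>U. convex_fun_on V (\<lambda>y. f x y)) \<longrightarrow>
        convex_fun_on (U \<times> V) (\<lambda>(x,y). sup_conv \<epsilon> U f x y + (norm x)^2 / (2 * \<epsilon>)))
   \<and> (\<forall>\<epsilon> \<epsilon>'. 0 < \<epsilon>' \<and> \<epsilon>' \<le> \<epsilon> \<longrightarrow> (\<forall>x\<in>U. \<forall>y\<in>V.
        f x y \<le> sup_conv \<epsilon>' U f x y \<and> sup_conv \<epsilon>' U f x y \<le> sup_conv \<epsilon> U f x y))
   \<and> (\<forall>\<epsilon>>0. let \<delta> = 2 * sqrt (\<epsilon> * sup_norm U V f) in 0 < \<delta> \<longrightarrow>
        (\<forall>x\<in>shrink U \<delta>. \<forall>y\<in>V.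
           sup_conv \<epsilon> U f x y = (SUP \<tau>\<in>ball 0 \<delta>. f (x + \<tau>) y - (norm \<tau>)^2 / (2 * \<epsilon>))))
   \<and> (\<forall>x\<in>U. \<forall>y\<in>V. ((\<lambda>\<epsilon>. sup_conv \<epsilon> U f x y) \<longlongrightarrow> f x y) (at_right 0))
   \<and> (\<forall>F0 :: (real \<times> (real^'n) \<times> (real^'n^'n)) set.
        cc_primitive_subequation F0 \<and> negativity_property F0 \<and> FP_subharmonic F0 (U \<times> V) f \<longrightarrow>
        (\<forall>\<epsilon>>0. let \<delta> = 2 * sqrt (\<epsilon> * sup_norm U V f) in 0 < \<delta> \<longrightarrow>
           FP_subharmonic F0 (shrink U \<delta> \<times> V) (sup_conv \<epsilon> U f)))"
proof -
  define M where "M = sup_norm U V f"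
  interpret bounded_on_prod U V f M
    using abs_le_sup_norm[OF bdd] by unfold_locales (simp add: M_def)
  have M_pos: "0 < M" if "0 < \<epsilon>" "0 < 2 * sqrt (\<epsilon> * M)" for \<epsilon>
    using that by (simp add: zero_less_mult_iff)
  have "convex_fun_on (U \<times> V) (\<lambda>(x,y). sup_conv \<epsilon> U f x y + (norm x)^2 / (2 * \<epsilon>))"
    if "0 < \<epsilon>" "\<forall>x\<in>U. convex_fun_on V (\<lambda>y. f x y)" for \<epsilon>
    using convex_fun_on_sup_conv_plus_norm that by blast
  moreover have "f x y \<le> sup_conv \<epsilon>' U f x y \<and> sup_conv \<epsilon>' U f x y \<le> sup_conv \<epsilon> U f x y"
    if "0 < \<epsilon>'" "\<epsilon>' \<le> \<epsilon>" "x \<in> U" "y \<in> V" for \<epsilon> \<epsilon>' x y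
    using le_sup_conv sup_conv_mono that by blast
  moreover have "sup_conv \<epsilon> U f x y
      = (SUP \<tau>\<in>ball 0 (2 * sqrt (\<epsilon> * M)). f (x + \<tau>) y - (norm \<tau>)^2 / (2 * \<epsilon>))"
    if "0 < \<epsilon>" "0 < 2 * sqrt (\<epsilon> * M)" "x \<in> shrink U (2 * sqrt (\<epsilon> * M))" "y \<in> V" for \<epsilon> x y
    using sup_conv_eq_SUP_ball M_pos that by (simp add: shrink_def)
  moreover have "((\<lambda>\<epsilon>. sup_conv \<epsilon> U f x y) \<longlongrightarrow> f x y) (at_right 0)" if "x \<in> U" "y \<in> V" for x y
    using tendsto_sup_conv_at_right_0[OF usc that] .
  moreover have "FP_subharmonic F0 (shrink U (2 * sqrt (\<epsilon> * M)) \<times> V) (sup_conv \<epsilon> U f)"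
    if "negativity_property F0" "FP_subharmonic F0 (U \<times> V) f" "0 < \<epsilon>" "0 < 2 * sqrt (\<epsilon> * M)"
    for F0 :: "(real \<times> (real^'n) \<times> (real^'n^'n)) set" and \<epsilon>
    using FP_subharmonic_sup_conv[OF usc assms(1,2)] M_pos that by blast
  ultimately show ?thesis
    unfolding Let_def M_def[symmetric] by blast
qed

end
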